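(* For $g\ge1$ and $n\ge1$, as modules over $\mathsf{Sp}(2g,2)$ we have $\Gamma(2g,2^n)/\Gamma(2g,2^n,2^{n+1})\cong U$ and $\Gamma(2g,2^n,2^{n+1})/\Gamma(2g,2^{n+1})\cong\Lambda^2(U)$.
   Context: $\mathsf{Sp}(2g,\mathbb Z)$ is the group of integer matrices $X$ with $X^tJX=J$, $J=\begin{pmatrix}0&I\\-I&0\end{pmatrix}$; $\mathsf{Sp}(2g,2)$ is the same over $\mathbb F_2$. $\Gamma(2g,N)$ is the kernel of $\mathsf{Sp}(2g,\mathbb Z)\to\mathsf{Sp}(2g,\mathbb Z/N)$. The Igusa subgroup $\Gamma(2g,N,2N)$ consists of the matrices $\begin{pmatrix}A&B\\C&D\end{pmatrix}\in\Gamma(2g,N)$ such that all diagonal entries of $AB^t$ and of $CD^t$ are divisible by $2N$. The quotients in question are elementary abelian $2$-groups on which $\mathsf{Sp}(2g,\mathbb Z)$ acts by conjugation, the action factoring through $\mathsf{Sp}(2g,2)$. $U=\mathbb F_2^{2g}$ is the natural module, and $\Lambda^2(U)\subseteq U\otimes U$ is the subspace spanned by the elements $u\otimes u'+u'\otimes u$. *)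

theory Defs
  imports "Jordan_Normal_Form.Matrix" "HOL-Algebra.Coset" "HOL-Library.Z2"
begin

definition Jmat :: "nat \<Rightarrow> int mat" where
  "Jmat g = four_block_mat (0\<^sub>m g g) (1\<^sub>m g) (- 1\<^sub>m g) (0\<^sub>m g g)"

definition Sp :: "nat \<Rightarrow> int mat set" where
  "Sp g = {X \<in> carrier_mat (2*g) (2*g). transpose_mat X * Jmat g * X = Jmat g}"

definition Gamma :: "nat \<Rightarrow> int \<Rightarrow> int mat set" where
  "Gamma g N = {X \<in> Sp g. \<forall>i<2*g. \<forall>j<2*g. N dvd (X - 1\<^sub>m (2*g)) $$ (i,j)}"

(* Igusa subgroup Gamma(2g, N, 2N) *)
definition Igusa :: "nat \<Rightarrow> int \<Rightarrow> int mat set" where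
  "Igusa g N = {X \<in> Gamma g N.
     (case split_block X g g of (A, B, C, D) \<Rightarrow>
        (\<forall>i<g. (2*N) dvd (A * transpose_mat B) $$ (i,i)) \<and>
        (\<forall>i<g. (2*N) dvd (C * transpose_mat D) $$ (i,i)))}"

definition matgrp :: "nat \<Rightarrow> int mat set \<Rightarrow> int mat monoid" where
  "matgrp g S = \<lparr>carrier = S, mult = (*), one = 1\<^sub>m (2*g)\<rparr>"

definition red2 :: "int mat \<Rightarrow> bit mat" where
  "red2 X = map_mat of_int X"

definition Ugrp :: "nat \<Rightarrow> bit vec monoid" where
  "Ugrp g = \<lparr>carrier = carrier_vec (2*g), mult = (+), one = 0\<^sub>v (2*g)\<rparr>"

(* U \<otimes> U is modelled by 2g x 2g matrices over F_2, u \<otimes> u' \<mapsto> u u'^T;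
   the action X (u \<otimes> u') = Xu \<otimes> Xu' becomes M \<mapsto> X M X^T *)
definition tens :: "bit vec \<Rightarrow> bit vec \<Rightarrow> bit mat" where
  "tens u v = mat (dim_vec u) (dim_vec v) (\<lambda>(i,j). u $ i * v $ j)"

inductive_set Lambda2 :: "nat \<Rightarrow> bit mat set" for g :: nat where
  zero: "0\<^sub>m (2*g) (2*g) \<in> Lambda2 g"
| add: "M \<in> Lambda2 g \<Longrightarrow> u \<in> carrier_vec (2*g) \<Longrightarrow> u' \<in> carrier_vec (2*g) \<Longrightarrow>
        M + (tens u u' + tens u' u) \<in> Lambda2 g"

definition Lambda2grp :: "nat \<Rightarrow> bit mat monoid" where
  "Lambda2grp g = \<lparr>carrier = Lambda2 g, mult = (+), one = 0\<^sub>m (2*g) (2*g)\<rparr>"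

definition conjset :: "int mat \<Rightarrow> int mat \<Rightarrow> int mat set \<Rightarrow> int mat set" where
  "conjset X Xi S = (\<lambda>Y. X * Y * Xi) ` S"

end

theory Submission
  imports Defs "Jordan_Normal_Form.Determinant"
begin

(* Write X in Gamma(2g,N) as X = 1 + N M.  For N even, X |-> M J mod 2 is a homomorphism,
   because the cross term N M M' of a product vanishes mod 2, and its kernel is Gamma(2g,2N).
   The relation X J X^T = J makes M J symmetric mod 2, and for Y in Sp(2g,Z) the relation
   Y^-1 J = J Y^T turns conjugation by Y into M J |-> Y (M J) Y^T, the action on U \<otimes> U.
   In characteristic 2 the diagonal of a symmetric form transforms linearly under this action,
   which gives an equivariant homomorphism onto U; its kernel is the Igusa subgroup, and there
   the form is alternating, i.e. lies in Lambda^2(U).  Both maps are onto because the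
   transvection 1 + N v v^T J is sent to v v^T. *)

declare assoc_mult_mat[simp del]
declare add_bit_eq_xor[simp del] mult_bit_eq_and[simp del]

lemma Jmat_carrier[simp]: "Jmat g \<in> carrier_mat (2*g) (2*g)"
  unfolding Jmat_def by (simp add: mult_2)

lemma dim_Jmat[simp]: "dim_row (Jmat g) = 2*g" "dim_col (Jmat g) = 2*g"
  using Jmat_carrier[of g] unfolding carrier_mat_def by auto

lemma index_Jmat: "i < 2*g \<Longrightarrow> j < 2*g \<Longrightarrow> Jmat g $$ (i,j) =
  (if i < g \<and> j = i + g then 1 else if g \<le> i \<and> i = j + g then -1 else 0)"
  unfolding Jmat_def by auto

lemma transpose_Jmat: "transpose_mat (Jmat g) = - Jmat g"
  by (rule eq_matI) (auto simp: index_Jmat)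

lemma Jmat_mult_Jmat: "Jmat g * Jmat g = - 1\<^sub>m (2*g)"
proof -
  have "Jmat g * Jmat g = four_block_mat (0\<^sub>m g g * 0\<^sub>m g g + 1\<^sub>m g * - 1\<^sub>m g) (0\<^sub>m g g * 1\<^sub>m g + 1\<^sub>m g * 0\<^sub>m g g)
     (- 1\<^sub>m g * 0\<^sub>m g g + 0\<^sub>m g g * - 1\<^sub>m g) (- 1\<^sub>m g * 1\<^sub>m g + 0\<^sub>m g g * 0\<^sub>m g g)"
    unfolding Jmat_def by (rule mult_four_block_mat) auto
  also have "\<dots> = - 1\<^sub>m (2*g)"
    by (rule eq_matI) (auto simp: index_mat_four_block)
  finally show ?thesis .
qed

lemma transpose_Jmat_mult_Jmat: "transpose_mat (Jmat g) * Jmat g = 1\<^sub>m (2*g)"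
  unfolding transpose_Jmat by (simp add: Jmat_mult_Jmat)

lemma Jmat_mult_transpose_Jmat: "Jmat g * transpose_mat (Jmat g) = 1\<^sub>m (2*g)"
  unfolding transpose_Jmat using uminus_mult_right_mat[of "Jmat g" "Jmat g"]
  by (simp add: Jmat_mult_Jmat)

lemma assoc_mult_mat_dim:
  assumes "dim_col A = dim_row B" "dim_col B = dim_row C"
  shows "A * B * C = A * (B * C)"
  using assms by (intro assoc_mult_mat[of _ "dim_row A" "dim_col A" _ "dim_col B" _ "dim_col C"]) auto

lemma mult_add_distrib_mat_dim:
  assumes "dim_col A = dim_row B" "dim_row B = dim_row C" "dim_col B = dim_col C"
  shows "A * (B + C) = A * B + A * (C :: 'a :: semiring_0 mat)"
  using assms by (intro mult_add_distrib_mat[of _ "dim_row A" "dim_col A" _ "dim_col B"]) auto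

lemma add_mult_distrib_mat_dim:
  assumes "dim_row A = dim_row B" "dim_col A = dim_col B" "dim_col A = dim_row C"
  shows "(A + B) * C = A * C + B * (C :: 'a :: semiring_0 mat)"
  using assms by (intro add_mult_distrib_mat[of _ "dim_row A" "dim_col A" _ _ "dim_col C"]) auto

lemma mult_smult_distrib_dim:
  assumes "dim_col A = dim_row B"
  shows "A * (k \<cdot>\<^sub>m B) = (k :: 'a :: comm_semiring_0) \<cdot>\<^sub>m (A * B)"
  using assms by (intro mult_smult_distrib[of _ "dim_row A" "dim_col A" _ "dim_col B"]) auto

lemma mult_smult_assoc_mat_dim:
  assumes "dim_col A = dim_row B"
  shows "(k \<cdot>\<^sub>m A) * B = (k :: 'a :: comm_semiring_0) \<cdot>\<^sub>m (A * B)"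
  using assms by (intro mult_smult_assoc_mat[of _ "dim_row A" "dim_col A" _ "dim_col B"]) auto

lemma transpose_mult_dim:
  assumes "dim_col A = dim_row B"
  shows "transpose_mat (A * B) = transpose_mat B * transpose_mat (A :: 'a :: comm_semiring_0 mat)"
  using assms by (intro transpose_mult[of _ "dim_row A" "dim_col A" _ "dim_col B"]) auto

lemma transpose_add_dim:
  assumes "dim_row A = dim_row B" "dim_col A = dim_col B"
  shows "transpose_mat (A + B) = transpose_mat A + transpose_mat B"
  using assms by (intro transpose_add[of _ "dim_row A" "dim_col A"]) auto

lemma transpose_smult: "transpose_mat (k \<cdot>\<^sub>m A) = k \<cdot>\<^sub>m transpose_mat A"
  by (rule eq_matI) simp_all

lemmas mat_dim_simps = assoc_mult_mat_dim mult_add_distrib_mat_dim add_mult_distrib_mat_dim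
  mult_smult_distrib_dim mult_smult_assoc_mat_dim transpose_mult_dim transpose_add_dim transpose_smult

lemma mult_one_plus_smult:
  fixes A B :: "'a :: comm_ring_1 mat"
  assumes "A \<in> carrier_mat n n" "B \<in> carrier_mat n n"
  shows "(1\<^sub>m n + N \<cdot>\<^sub>m A) * (1\<^sub>m n + N \<cdot>\<^sub>m B) = 1\<^sub>m n + N \<cdot>\<^sub>m (A + B + N \<cdot>\<^sub>m (A * B))"
proof -
  have "(1\<^sub>m n + N \<cdot>\<^sub>m A) * (1\<^sub>m n + N \<cdot>\<^sub>m B) = (1\<^sub>m n + N \<cdot>\<^sub>m B) + N \<cdot>\<^sub>m A * (1\<^sub>m n + N \<cdot>\<^sub>m B)"
    using assms by (simp add: add_mult_distrib_mat_dim)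
  also have "N \<cdot>\<^sub>m A * (1\<^sub>m n + N \<cdot>\<^sub>m B) = N \<cdot>\<^sub>m A + N \<cdot>\<^sub>m (N \<cdot>\<^sub>m (A * B))"
    using assms by (simp add: mult_add_distrib_mat_dim mult_smult_distrib_dim mult_smult_assoc_mat_dim)
  finally show ?thesis
    by (rule trans) (rule eq_matI, use assms in \<open>simp_all add: algebra_simps\<close>)
qed

lemma conj_one_plus_smult:
  fixes A Y Yi :: "'a :: comm_ring_1 mat"
  assumes "A \<in> carrier_mat n n" "Y \<in> carrier_mat n n" "Yi \<in> carrier_mat n n" "Y * Yi = 1\<^sub>m n"
  shows "Y * (1\<^sub>m n + N \<cdot>\<^sub>m A) * Yi = 1\<^sub>m n + N \<cdot>\<^sub>m (Y * A * Yi)"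
proof -
  have "Y * (1\<^sub>m n + N \<cdot>\<^sub>m A) * Yi = Y * Yi + N \<cdot>\<^sub>m (Y * A * Yi)"
    using assms by (simp add: mat_dim_simps)
  with assms(4) show ?thesis by simp
qed

lemma int_mat_mult_left_right_inverse:
  assumes A: "(A :: int mat) \<in> carrier_mat n n" and B: "B \<in> carrier_mat n n" and AB: "A * B = 1\<^sub>m n"
  shows "B * A = 1\<^sub>m n"
proof -
  let ?h = "map_mat (of_int :: int \<Rightarrow> rat)"
  have "?h A * ?h B = 1\<^sub>m n"
    using of_int_hom.mat_hom_mult[OF A B] AB of_int_hom.mat_hom_one by metis
  then have "?h B * ?h A = 1\<^sub>m n"
    by (rule mat_mult_left_right_inverse[rotated 2]) (use A B in auto)
  then have "?h (B * A) = ?h (1\<^sub>m n)"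
    using of_int_hom.mat_hom_mult[OF B A] of_int_hom.mat_hom_one by metis
  then show ?thesis by (rule of_int_hom.mat_hom_inj)
qed

lemma Sp_carrier: "X \<in> Sp g \<Longrightarrow> X \<in> carrier_mat (2*g) (2*g)"
  unfolding Sp_def by auto

lemma Sp_transpose_J: "X \<in> Sp g \<Longrightarrow> transpose_mat X * Jmat g * X = Jmat g"
  unfolding Sp_def by auto

lemma Sp_one: "1\<^sub>m (2*g) \<in> Sp g"
  unfolding Sp_def by simp

lemma Sp_mult: assumes X: "X \<in> Sp g" and Y: "Y \<in> Sp g" shows "X * Y \<in> Sp g"
proof -
  have dims: "dim_row X = 2*g" "dim_col X = 2*g" "dim_row Y = 2*g" "dim_col Y = 2*g"
    using Sp_carrier[OF X] Sp_carrier[OF Y] by auto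
  have "transpose_mat (X * Y) * Jmat g * (X * Y) = transpose_mat Y * ((transpose_mat X * Jmat g * X) * Y)"
    using dims by (simp add: mat_dim_simps)
  also have "\<dots> = Jmat g"
    using Sp_transpose_J[OF X] Sp_transpose_J[OF Y] dims by (simp add: assoc_mult_mat_dim)
  finally show ?thesis unfolding Sp_def using dims by (auto intro!: carrier_matI)
qed

definition Sp_inverse :: "nat \<Rightarrow> int mat \<Rightarrow> int mat" where
  "Sp_inverse g X = transpose_mat (Jmat g) * transpose_mat X * Jmat g"

lemma Sp_inverse_carrier: "X \<in> Sp g \<Longrightarrow> Sp_inverse g X \<in> carrier_mat (2*g) (2*g)"
  unfolding Sp_inverse_def using Sp_carrier by auto

lemma Sp_inverse_left: assumes X: "X \<in> Sp g" shows "Sp_inverse g X * X = 1\<^sub>m (2*g)"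
proof -
  have dims: "dim_row X = 2*g" "dim_col X = 2*g" using Sp_carrier[OF X] by auto
  have "Sp_inverse g X * X = transpose_mat (Jmat g) * (transpose_mat X * Jmat g * X)"
    unfolding Sp_inverse_def using dims by (simp add: mat_dim_simps)
  also have "\<dots> = 1\<^sub>m (2*g)" using Sp_transpose_J[OF X] transpose_Jmat_mult_Jmat by simp
  finally show ?thesis .
qed

lemma Sp_inverse_right: assumes X: "X \<in> Sp g" shows "X * Sp_inverse g X = 1\<^sub>m (2*g)"
  using int_mat_mult_left_right_inverse[OF Sp_inverse_carrier[OF X] Sp_carrier[OF X] Sp_inverse_left[OF X]] .

lemma Sp_J_transpose: assumes X: "X \<in> Sp g" shows "X * Jmat g * transpose_mat X = Jmat g"
proof -
  have dims: "dim_row X = 2*g" "dim_col X = 2*g" using Sp_carrier[OF X] by auto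
  have "X * transpose_mat (Jmat g) * transpose_mat X = (X * Sp_inverse g X) * transpose_mat (Jmat g)"
    unfolding Sp_inverse_def using dims by (simp add: mat_dim_simps Jmat_mult_transpose_Jmat)
  then have "- (X * Jmat g * transpose_mat X) = - Jmat g"
    unfolding Sp_inverse_right[OF X] transpose_Jmat using dims by simp
  then show ?thesis by simp
qed

lemma Sp_inverse_Sp: assumes X: "X \<in> Sp g" shows "Sp_inverse g X \<in> Sp g"
proof -
  have dims: "dim_row X = 2*g" "dim_col X = 2*g" using Sp_carrier[OF X] by auto
  have "transpose_mat (Sp_inverse g X) * Jmat g * Sp_inverse g X =
     transpose_mat (Jmat g) * ((X * (Jmat g * Jmat g * transpose_mat (Jmat g)) * transpose_mat X) * Jmat g)"
    unfolding Sp_inverse_def using dims by (simp add: mat_dim_simps)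
  also have "Jmat g * Jmat g * transpose_mat (Jmat g) = Jmat g"
    by (simp add: assoc_mult_mat_dim Jmat_mult_transpose_Jmat)
  also have "transpose_mat (Jmat g) * ((X * Jmat g * transpose_mat X) * Jmat g) = Jmat g"
    unfolding Sp_J_transpose[OF X]
    using transpose_Jmat_mult_Jmat assoc_mult_mat_dim[of "transpose_mat (Jmat g)" "Jmat g" "Jmat g"] by simp
  finally show ?thesis unfolding Sp_def using Sp_inverse_carrier[OF X] by simp
qed

lemma Sp_right_inverse_unique:
  assumes X: "X \<in> Sp g" and Xi: "Xi \<in> carrier_mat (2*g) (2*g)" and XXi: "X * Xi = 1\<^sub>m (2*g)"
  shows "Xi = Sp_inverse g X"
proof -
  have "Xi = (Sp_inverse g X * X) * Xi" using Sp_inverse_left[OF X] Xi by simp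
  also have "\<dots> = Sp_inverse g X * (X * Xi)"
    by (rule assoc_mult_mat[OF Sp_inverse_carrier[OF X] Sp_carrier[OF X] Xi])
  finally show ?thesis using XXi Sp_inverse_carrier[OF X] by simp
qed

section \<open>Principal congruence subgroups\<close>

definition deviation :: "int \<Rightarrow> nat \<Rightarrow> int mat \<Rightarrow> int mat" where
  "deviation N g X = mat (2*g) (2*g) (\<lambda>(i,j). (X $$ (i,j) - (if i = j then 1 else 0)) div N)"

lemma deviation_carrier[simp]: "deviation N g X \<in> carrier_mat (2*g) (2*g)"
  unfolding deviation_def by simp

lemma dim_deviation[simp]: "dim_row (deviation N g X) = 2*g" "dim_col (deviation N g X) = 2*g"
  unfolding deviation_def by auto

lemma Gamma_Sp: "X \<in> Gamma g N \<Longrightarrow> X \<in> Sp g"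
  unfolding Gamma_def by auto

lemma dim_Gamma: "X \<in> Gamma g N \<Longrightarrow> dim_row X = 2*g" "X \<in> Gamma g N \<Longrightarrow> dim_col X = 2*g"
  using Sp_carrier[OF Gamma_Sp] by auto

lemma Gamma_eq_one_plus_deviation: assumes X: "X \<in> Gamma g N"
  shows "X = 1\<^sub>m (2*g) + N \<cdot>\<^sub>m deviation N g X"
proof (rule eq_matI)
  fix i j assume "i < dim_row (1\<^sub>m (2*g) + N \<cdot>\<^sub>m deviation N g X)" "j < dim_col (1\<^sub>m (2*g) + N \<cdot>\<^sub>m deviation N g X)"
  then have i: "i < 2*g" and j: "j < 2*g" by auto
  have "N dvd (X - 1\<^sub>m (2*g)) $$ (i,j)" using X i j unfolding Gamma_def by auto
  then have "N dvd X $$ (i,j) - (if i = j then 1 else 0)" using i j dim_Gamma[OF X] by simp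
  then show "X $$ (i,j) = (1\<^sub>m (2*g) + N \<cdot>\<^sub>m deviation N g X) $$ (i,j)"
    using i j by (simp add: deviation_def)
qed (use dim_Gamma[OF X] in auto)

lemma deviation_one_plus_smult: assumes "C \<in> carrier_mat (2*g) (2*g)" "N \<noteq> 0"
  shows "deviation N g (1\<^sub>m (2*g) + N \<cdot>\<^sub>m C) = C"
  by (rule eq_matI) (use assms in \<open>auto simp: deviation_def\<close>)

lemma deviation_one: "deviation N g (1\<^sub>m (2*g)) = 0\<^sub>m (2*g) (2*g)"
  by (rule eq_matI) (auto simp: deviation_def)

lemma GammaI: assumes "X \<in> Sp g" "C \<in> carrier_mat (2*g) (2*g)" "X = 1\<^sub>m (2*g) + N \<cdot>\<^sub>m C"
  shows "X \<in> Gamma g N"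
  unfolding Gamma_def using assms by auto

lemma Gamma_one: "1\<^sub>m (2*g) \<in> Gamma g N"
  by (rule GammaI[OF Sp_one, of "0\<^sub>m (2*g) (2*g)"]) auto

lemma Gamma_mult_eq: assumes X: "X \<in> Gamma g N" and Y: "Y \<in> Gamma g N"
  shows "X * Y = 1\<^sub>m (2*g) + N \<cdot>\<^sub>m (deviation N g X + deviation N g Y + N \<cdot>\<^sub>m (deviation N g X * deviation N g Y))"
  using mult_one_plus_smult[OF deviation_carrier deviation_carrier]
    Gamma_eq_one_plus_deviation[OF X] Gamma_eq_one_plus_deviation[OF Y] by metis

lemma Gamma_mult: "X \<in> Gamma g N \<Longrightarrow> Y \<in> Gamma g N \<Longrightarrow> X * Y \<in> Gamma g N"
  by (rule GammaI[OF Sp_mult[OF Gamma_Sp Gamma_Sp] _ Gamma_mult_eq]) auto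

lemma deviation_mult: assumes X: "X \<in> Gamma g N" and Y: "Y \<in> Gamma g N" and N: "N \<noteq> 0"
  shows "deviation N g (X * Y) = deviation N g X + deviation N g Y + N \<cdot>\<^sub>m (deviation N g X * deviation N g Y)"
  unfolding Gamma_mult_eq[OF X Y] by (rule deviation_one_plus_smult) (use N in auto)

lemma Gamma_Sp_inverse: assumes X: "X \<in> Gamma g N" shows "Sp_inverse g X \<in> Gamma g N"
proof -
  define M where "M = deviation N g X"
  have dims: "dim_row M = 2*g" "dim_col M = 2*g" unfolding M_def by auto
  have "Sp_inverse g X = transpose_mat (Jmat g) * transpose_mat (1\<^sub>m (2*g) + N \<cdot>\<^sub>m M) * Jmat g"
    unfolding Sp_inverse_def M_def using Gamma_eq_one_plus_deviation[OF X] by simp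
  also have "\<dots> = 1\<^sub>m (2*g) + N \<cdot>\<^sub>m (transpose_mat (Jmat g) * transpose_mat M * Jmat g)"
    using dims by (simp add: mat_dim_simps transpose_Jmat_mult_Jmat)
  finally have "Sp_inverse g X = 1\<^sub>m (2*g) + N \<cdot>\<^sub>m (transpose_mat (Jmat g) * transpose_mat M * Jmat g)" .
  then show ?thesis
    by (rule GammaI[OF Sp_inverse_Sp[OF Gamma_Sp[OF X]], rotated]) (use dims in \<open>auto intro!: carrier_matI\<close>)
qed

lemma Gamma_conj: assumes X: "X \<in> Gamma g N" and Y: "Y \<in> Sp g"
  and Yi: "Yi \<in> carrier_mat (2*g) (2*g)" and YYi: "Y * Yi = 1\<^sub>m (2*g)"
  shows "Y * X * Yi = 1\<^sub>m (2*g) + N \<cdot>\<^sub>m (Y * deviation N g X * Yi)"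
  using conj_one_plus_smult[OF deviation_carrier Sp_carrier[OF Y] Yi YYi]
    Gamma_eq_one_plus_deviation[OF X] by metis

lemma Gamma_subset_double:
  assumes X: "X \<in> Gamma g (2*N)" shows "X \<in> Gamma g N"
  using X unfolding Gamma_def by (blast intro: dvd_mult_right)

lemma of_int_bit: "(of_int k :: bit) = (if even k then 0 else 1)"
  by (cases "even k") (auto elim!: evenE oddE)

lemma dim_red2[simp]: "dim_row (red2 A) = dim_row A" "dim_col (red2 A) = dim_col A"
  unfolding red2_def by auto

lemma index_red2[simp]: "i < dim_row A \<Longrightarrow> j < dim_col A \<Longrightarrow> red2 A $$ (i,j) = of_int (A $$ (i,j))"
  unfolding red2_def by auto

lemma red2_add: "dim_row A = dim_row B \<Longrightarrow> dim_col A = dim_col B \<Longrightarrow> red2 (A + B) = red2 A + red2 B"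
  by (rule eq_matI) auto

lemma red2_mult: assumes "dim_col A = dim_row B" shows "red2 (A * B) = red2 A * red2 B"
  unfolding red2_def using assms
  by (intro of_int_hom.mat_hom_mult[of _ "dim_row A" "dim_col A" _ "dim_col B"]) auto

lemma red2_smult_even: "even N \<Longrightarrow> red2 (N \<cdot>\<^sub>m A) = 0\<^sub>m (dim_row A) (dim_col A)"
  by (rule eq_matI) (auto simp: of_int_bit)

lemma red2_one[simp]: "red2 (1\<^sub>m n) = 1\<^sub>m n"
  by (rule eq_matI) auto

lemma red2_transpose: "red2 (transpose_mat A) = transpose_mat (red2 A)"
  by (rule eq_matI) auto

lemma red2_uminus: "red2 (- A) = red2 A"
  by (rule eq_matI) auto

lemma transpose_red2_Jmat: "transpose_mat (red2 (Jmat g)) = red2 (Jmat g)"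
  by (metis red2_transpose red2_uminus transpose_Jmat)

lemma red2_Jmat_squared: "red2 (Jmat g) * red2 (Jmat g) = 1\<^sub>m (2*g)"
  by (metis Jmat_mult_Jmat dim_Jmat red2_mult red2_one red2_uminus)

lemma red2_Sp_inverse_Jmat: assumes Y: "Y \<in> Sp g"
  shows "red2 (Sp_inverse g Y * Jmat g) = red2 (Jmat g) * transpose_mat (red2 Y)"
proof -
  have dims: "dim_row Y = 2*g" "dim_col Y = 2*g" using Sp_carrier[OF Y] by auto
  have "red2 (Sp_inverse g Y * Jmat g)
      = red2 (Jmat g) * transpose_mat (red2 Y) * (red2 (Jmat g) * red2 (Jmat g))"
    unfolding Sp_inverse_def using dims
    by (simp add: red2_mult red2_transpose transpose_red2_Jmat assoc_mult_mat_dim)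
  then show ?thesis using dims by (simp add: red2_Jmat_squared)
qed

section \<open>The symmetric form of an element of \<open>Gamma g N\<close>\<close>

definition deviation_form :: "int \<Rightarrow> nat \<Rightarrow> int mat \<Rightarrow> bit mat" where
  "deviation_form N g X = red2 (deviation N g X * Jmat g)"

definition deviation_diag :: "int \<Rightarrow> nat \<Rightarrow> int mat \<Rightarrow> bit vec" where
  "deviation_diag N g X = vec (2*g) (\<lambda>k. deviation_form N g X $$ (k,k))"

lemma deviation_form_carrier[simp]: "deviation_form N g X \<in> carrier_mat (2*g) (2*g)"
  unfolding deviation_form_def by (auto intro!: carrier_matI)

lemma dim_deviation_form[simp]:
  "dim_row (deviation_form N g X) = 2*g" "dim_col (deviation_form N g X) = 2*g"
  unfolding deviation_form_def by auto

lemma deviation_diag_carrier[simp]: "deviation_diag N g X \<in> carrier_vec (2*g)"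
  unfolding deviation_diag_def by simp

lemma deviation_form_one: "deviation_form N g (1\<^sub>m (2*g)) = 0\<^sub>m (2*g) (2*g)"
  unfolding deviation_form_def deviation_one by (rule eq_matI) auto

lemma deviation_form_mult:
  assumes X: "X \<in> Gamma g N" and Y: "Y \<in> Gamma g N" and N: "N \<noteq> 0" "even N"
  shows "deviation_form N g (X * Y) = deviation_form N g X + deviation_form N g Y"
proof -
  define A where "A = deviation N g X"
  define B where "B = deviation N g Y"
  have dims: "dim_row A = 2*g" "dim_col A = 2*g" "dim_row B = 2*g" "dim_col B = 2*g"
    unfolding A_def B_def by auto
  have "red2 (A + B + N \<cdot>\<^sub>m (A * B)) = red2 A + red2 B + 0\<^sub>m (2*g) (2*g)"
    using red2_smult_even[OF N(2), of "A * B"] dims by (simp add: red2_add)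
  also have "\<dots> = red2 A + red2 B"
    using dims by (intro right_add_zero_mat) (auto intro!: carrier_matI)
  finally have red: "red2 (A + B + N \<cdot>\<^sub>m (A * B)) = red2 A + red2 B" .
  have "deviation_form N g (X * Y) = red2 (A + B + N \<cdot>\<^sub>m (A * B)) * red2 (Jmat g)"
    unfolding deviation_form_def deviation_mult[OF X Y N(1)] A_def[symmetric] B_def[symmetric]
    using dims by (simp add: red2_mult)
  also have "\<dots> = (red2 A + red2 B) * red2 (Jmat g)"
    unfolding red ..
  also have "\<dots> = deviation_form N g X + deviation_form N g Y"
    unfolding deviation_form_def A_def B_def by (simp add: add_mult_distrib_mat_dim red2_mult)
  finally show ?thesis .
qed

lemma deviation_diag_mult:
  assumes "X \<in> Gamma g N" "Y \<in> Gamma g N" "N \<noteq> 0" "even N"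
  shows "deviation_diag N g (X * Y) = deviation_diag N g X + deviation_diag N g Y"
  unfolding deviation_diag_def deviation_form_mult[OF assms] by (rule eq_vecI) auto

lemma deviation_form_conj:
  assumes X: "X \<in> Gamma g N" and Y: "Y \<in> Sp g" and Yi: "Yi \<in> carrier_mat (2*g) (2*g)"
    and YYi: "Y * Yi = 1\<^sub>m (2*g)" and N: "N \<noteq> 0"
  shows "deviation_form N g (Y * X * Yi) = red2 Y * deviation_form N g X * transpose_mat (red2 Y)"
proof -
  define M where "M = deviation N g X"
  have dims: "dim_row Y = 2*g" "dim_col Y = 2*g" "dim_row M = 2*g" "dim_col M = 2*g"
    using Sp_carrier[OF Y] unfolding M_def by auto
  have "deviation N g (Y * X * Yi) = Y * M * Yi"
    unfolding Gamma_conj[OF X Y Yi YYi] M_def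
    by (rule deviation_one_plus_smult) (use Yi dims N in \<open>auto intro!: carrier_matI\<close>)
  then have "deviation_form N g (Y * X * Yi) = red2 ((Y * M) * (Sp_inverse g Y * Jmat g))"
    unfolding deviation_form_def Sp_right_inverse_unique[OF Y Yi YYi]
    using Sp_inverse_carrier[OF Y] dims by (simp add: assoc_mult_mat_dim)
  also have "\<dots> = red2 Y * (red2 M * red2 (Jmat g)) * transpose_mat (red2 Y)"
    using Sp_inverse_carrier[OF Y] dims
    by (simp add: red2_mult red2_Sp_inverse_Jmat[OF Y] assoc_mult_mat_dim)
  also have "red2 M * red2 (Jmat g) = deviation_form N g X"
    unfolding deviation_form_def M_def by (simp add: red2_mult)
  finally show ?thesis .
qed

lemma one_plus_smult_Jmat_transpose:
  fixes M :: "int mat" assumes dims: "dim_row M = 2*g" "dim_col M = 2*g"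
  shows "(1\<^sub>m (2*g) + N \<cdot>\<^sub>m M) * Jmat g * transpose_mat (1\<^sub>m (2*g) + N \<cdot>\<^sub>m M)
    = Jmat g + N \<cdot>\<^sub>m (M * Jmat g + Jmat g * transpose_mat M + N \<cdot>\<^sub>m (M * Jmat g * transpose_mat M))"
proof -
  have "transpose_mat (1\<^sub>m (2*g) + N \<cdot>\<^sub>m M) = 1\<^sub>m (2*g) + N \<cdot>\<^sub>m transpose_mat M"
    by (rule eq_matI) (use dims in auto)
  moreover have "(1\<^sub>m (2*g) + N \<cdot>\<^sub>m M) * Jmat g = Jmat g + N \<cdot>\<^sub>m (M * Jmat g)"
    using dims by (simp add: mat_dim_simps)
  ultimately show ?thesis
    by (simp add: dims mat_dim_simps) (rule eq_matI, simp_all add: dims algebra_simps)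
qed

lemma deviation_form_symmetric:
  assumes X: "X \<in> Gamma g N" and N: "N \<noteq> 0" "even N"
  shows "transpose_mat (deviation_form N g X) = deviation_form N g X"
proof (rule eq_matI)
  define M where "M = deviation N g X"
  have dims: "dim_row M = 2*g" "dim_col M = 2*g" unfolding M_def by auto
  have sympl: "Jmat g + N \<cdot>\<^sub>m (M * Jmat g + Jmat g * transpose_mat M + N \<cdot>\<^sub>m (M * Jmat g * transpose_mat M)) = Jmat g"
    using Sp_J_transpose[OF Gamma_Sp[OF X]] one_plus_smult_Jmat_transpose[OF dims, of N]
      Gamma_eq_one_plus_deviation[OF X] unfolding M_def by simp
  have JMT: "Jmat g * transpose_mat M = - transpose_mat (M * Jmat g)"
    using dims by (simp add: transpose_mult_dim transpose_Jmat)
  fix i j assume "i < dim_row (deviation_form N g X)" "j < dim_col (deviation_form N g X)"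
  then have i: "i < 2*g" and j: "j < 2*g" by auto
  from arg_cong[OF sympl, of "\<lambda>A. A $$ (i,j)"]
  have "(M * Jmat g) $$ (i,j) + (Jmat g * transpose_mat M) $$ (i,j) + N * (M * Jmat g * transpose_mat M) $$ (i,j) = 0"
    using i j dims N(1) by simp
  moreover have "(Jmat g * transpose_mat M) $$ (i,j) = - (M * Jmat g) $$ (j,i)"
    unfolding JMT using i j dims by simp
  ultimately have "(M * Jmat g) $$ (i,j) - (M * Jmat g) $$ (j,i) = - N * (M * Jmat g * transpose_mat M) $$ (i,j)"
    by simp
  then have "even ((M * Jmat g) $$ (i,j) - (M * Jmat g) $$ (j,i))"
    using N(2) by (metis dvd_mult2 even_minus)
  then have "even ((M * Jmat g) $$ (i,j)) = even ((M * Jmat g) $$ (j,i))"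
    by simp
  then show "transpose_mat (deviation_form N g X) $$ (i, j) = deviation_form N g X $$ (i, j)"
    unfolding deviation_form_def M_def[symmetric] using i j dims by (simp add: of_int_bit)
qed auto

lemma sum_symmetric_bit:
  fixes f :: "nat \<Rightarrow> nat \<Rightarrow> bit"
  assumes "\<And>j k. f j k = f k j"
  shows "(\<Sum>k<n. \<Sum>j<n. f j k) = (\<Sum>j<n. f j j)"
proof (induction n)
  case (Suc n)
  have "(\<Sum>k<Suc n. \<Sum>j<Suc n. f j k) = (\<Sum>k<n. \<Sum>j<n. f j k) + ((\<Sum>k<n. f n k) + ((\<Sum>j<n. f j n) + f n n))"
    by (simp add: sum.distrib ac_simps)
  also have "(\<Sum>k<n. f n k) = (\<Sum>j<n. f j n)"
    using assms by simp
  finally show ?case unfolding Suc.IH by (simp flip: add.assoc)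
qed simp

lemma diag_conj_symmetric_bit:
  fixes R T :: "bit mat"
  assumes R: "R \<in> carrier_mat n n" and T: "T \<in> carrier_mat n n" and sym: "transpose_mat T = T" and i: "i < n"
  shows "(R * T * transpose_mat R) $$ (i,i) = (\<Sum>j<n. R $$ (i,j) * T $$ (j,j))"
proof -
  have T_sym: "T $$ (k,j) = T $$ (j,k)" if "j < n" "k < n" for j k
    using arg_cong[OF sym, of "\<lambda>A. A $$ (j,k)"] that T by auto
  have "(R * T * transpose_mat R) $$ (i,i) = (\<Sum>k<n. \<Sum>j<n. R $$ (i,j) * T $$ (j,k) * R $$ (i,k))"
    using R T i by (simp add: scalar_prod_def lessThan_atLeast0 sum_distrib_right)
  also have "\<dots> = (\<Sum>k<n. \<Sum>j<n. R $$ (i,j) * (if j < n \<and> k < n then T $$ (j,k) else 0) * R $$ (i,k))"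
    by simp
  also have "\<dots> = (\<Sum>j<n. R $$ (i,j) * (if j < n \<and> j < n then T $$ (j,j) else 0) * R $$ (i,j))"
    by (rule sum_symmetric_bit) (auto simp: T_sym mult.commute mult.left_commute)
  also have "\<dots> = (\<Sum>j<n. R $$ (i,j) * T $$ (j,j))"
    by (rule sum.cong) (auto simp: mult.commute mult.left_commute)
  finally show ?thesis .
qed

lemma deviation_diag_conj:
  assumes X: "X \<in> Gamma g N" and Y: "Y \<in> Sp g" and Yi: "Yi \<in> carrier_mat (2*g) (2*g)"
    and YYi: "Y * Yi = 1\<^sub>m (2*g)" and N: "N \<noteq> 0" "even N"
  shows "deviation_diag N g (Y * X * Yi) = red2 Y *\<^sub>v deviation_diag N g X"
proof (rule eq_vecI)
  have R: "red2 Y \<in> carrier_mat (2*g) (2*g)" using Sp_carrier[OF Y] by (auto intro!: carrier_matI)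
  fix i assume "i < dim_vec (red2 Y *\<^sub>v deviation_diag N g X)"
  then have i: "i < 2*g" using Sp_carrier[OF Y] by auto
  have "deviation_diag N g (Y * X * Yi) $ i = (red2 Y * deviation_form N g X * transpose_mat (red2 Y)) $$ (i,i)"
    unfolding deviation_diag_def deviation_form_conj[OF X Y Yi YYi N(1)] using i by simp
  also have "\<dots> = (\<Sum>j<2*g. red2 Y $$ (i,j) * deviation_form N g X $$ (j,j))"
    by (rule diag_conj_symmetric_bit[OF R deviation_form_carrier deviation_form_symmetric[OF X N] i])
  also have "\<dots> = (red2 Y *\<^sub>v deviation_diag N g X) $ i"
    using i Sp_carrier[OF Y] by (simp add: deviation_diag_def scalar_prod_def lessThan_atLeast0)
  finally show "deviation_diag N g (Y * X * Yi) $ i = (red2 Y *\<^sub>v deviation_diag N g X) $ i" .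
qed (use Sp_carrier[OF Y] in \<open>simp add: deviation_diag_def\<close>)

section \<open>The Igusa subgroup as a kernel\<close>

lemma diag_mult_Jmat:
  fixes M :: "int mat" assumes dims: "dim_row M = 2*g" "dim_col M = 2*g" and k: "k < 2*g"
  shows "(M * Jmat g) $$ (k,k) = (if k < g then - M $$ (k, k+g) else M $$ (k, k-g))"
proof -
  have "(M * Jmat g) $$ (k,k) = (\<Sum>l\<in>{0..<2*g}. M $$ (k,l) * Jmat g $$ (l,k))"
    using dims k by (simp add: scalar_prod_def)
  also have "\<dots> = (\<Sum>l\<in>{0..<2*g}. if l = (if k < g then k+g else k-g)
      then (if k < g then - M $$ (k, k+g) else M $$ (k, k-g)) else 0)"
    by (rule sum.cong) (use k in \<open>auto simp: index_Jmat\<close>)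
  also have "\<dots> = (if k < g then - M $$ (k, k+g) else M $$ (k, k-g))"
    using k by (auto simp: sum.delta')
  finally show ?thesis .
qed

lemma even_diag_mult_Jmat_iff:
  fixes M :: "int mat" assumes dM: "dim_row M = 2*g" "dim_col M = 2*g"
  shows "(\<forall>k<2*g. even ((M * Jmat g) $$ (k,k))) \<longleftrightarrow>
    (\<forall>i<g. even (M $$ (i,i+g))) \<and> (\<forall>i<g. even (M $$ (i+g,i)))"
proof (intro iffI conjI allI impI)
  fix i assume all: "\<forall>k<2*g. even ((M * Jmat g) $$ (k,k))" and i: "i < g"
  show "even (M $$ (i,i+g))" using all[rule_format, of i] i diag_mult_Jmat[OF dM, of i] by simp
  show "even (M $$ (i+g,i))" using all[rule_format, of "i+g"] i diag_mult_Jmat[OF dM, of "i+g"] by simp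
next
  fix k assume ev: "(\<forall>i<g. even (M $$ (i,i+g))) \<and> (\<forall>i<g. even (M $$ (i+g,i)))" and k: "k < 2*g"
  show "even ((M * Jmat g) $$ (k,k))"
  proof (cases "k < g")
    case True
    then show ?thesis using ev by (simp add: diag_mult_Jmat[OF dM k])
  next
    case False
    then have "k = (k - g) + g" "k - g < g" using k by auto
    then have "even (M $$ (k, k - g))" using ev by metis
    then show ?thesis using False by (simp add: diag_mult_Jmat[OF dM k])
  qed
qed

lemma Igusa_iff_row_sums:
  assumes "dim_row X = 2*g" "dim_col X = 2*g"
  shows "X \<in> Igusa g N \<longleftrightarrow> X \<in> Gamma g N \<and>
     (\<forall>i<g. 2*N dvd (\<Sum>k<g. X $$ (i,k) * X $$ (i,k+g))) \<and>
     (\<forall>i<g. 2*N dvd (\<Sum>k<g. X $$ (i+g,k) * X $$ (i+g,k+g)))"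
  using assms by (simp add: Igusa_def split_block_def Let_def scalar_prod_def lessThan_atLeast0)

text \<open>For \<open>X = 1 + N M\<close> the \<open>i\<close>-th diagonal entry of \<open>A B\<^sup>T\<close> (or \<open>C D\<^sup>T\<close>) is
  \<open>N b\<^sub>i + N\<^sup>2 c\<close>, where \<open>b\<^sub>i\<close> is the corresponding off-diagonal entry of \<open>M\<close>; with \<open>N\<close> even it is
  divisible by \<open>2N\<close> iff \<open>b\<^sub>i\<close> is even.\<close>

lemma sum_kronecker_plus_smult:
  fixes a b :: "nat \<Rightarrow> int" assumes i: "i < g"
  shows "(\<Sum>k<g. ((if i = k then 1 else 0) + N * a k) * (N * b k)) = N * b i + N * N * (\<Sum>k<g. a k * b k)"
proof -
  have "(\<Sum>k<g. ((if i = k then 1 else 0) + N * a k) * (N * b k))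
      = (\<Sum>k<g. (if i = k then N * b k else 0) + N * N * (a k * b k))"
    by (rule sum.cong) (auto simp: algebra_simps)
  also have "\<dots> = (\<Sum>k<g. (if i = k then N * b k else 0)) + (\<Sum>k<g. N * N * (a k * b k))"
    by (rule sum.distrib)
  finally show ?thesis using i by (simp add: sum_distrib_left)
qed

lemma double_dvd_iff_even:
  fixes N x c :: int assumes "N \<noteq> 0" "even N"
  shows "2 * N dvd N * x + N * N * c \<longleftrightarrow> even x"
proof -
  have "N * x + N * N * c = N * (x + N * c)" by (simp add: algebra_simps)
  then have "2 * N dvd N * x + N * N * c \<longleftrightarrow> 2 dvd x + N * c"
    using assms(1) by (simp add: mult.commute[of 2 N])
  also have "\<dots> \<longleftrightarrow> even x" using assms(2) by auto
  finally show ?thesis .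
qed

lemma Igusa_iff_deviation_diag:
  assumes X: "X \<in> Gamma g N" and N: "N \<noteq> 0" "even N"
  shows "X \<in> Igusa g N \<longleftrightarrow> deviation_diag N g X = 0\<^sub>v (2*g)"
proof -
  define M where "M = deviation N g X"
  have dM: "dim_row M = 2*g" "dim_col M = 2*g" unfolding M_def by auto
  have X_eq: "X $$ (i,k) = (if i = k then 1 else 0) + N * M $$ (i,k)" if "i < 2*g" "k < 2*g" for i k
    using arg_cong[OF Gamma_eq_one_plus_deviation[OF X], of "\<lambda>A. A $$ (i,k)"] that unfolding M_def by simp
  have upper: "2*N dvd (\<Sum>k<g. X $$ (i,k) * X $$ (i,k+g)) \<longleftrightarrow> even (M $$ (i, i+g))" if i: "i < g" for i
  proof -
    have "(\<Sum>k<g. X $$ (i,k) * X $$ (i,k+g)) = (\<Sum>k<g. ((if i = k then 1 else 0) + N * M $$ (i,k)) * (N * M $$ (i,k+g)))"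
      by (rule sum.cong) (use i in \<open>auto simp: X_eq\<close>)
    then show ?thesis using double_dvd_iff_even[OF N] by (simp add: sum_kronecker_plus_smult[OF i])
  qed
  have lower: "2*N dvd (\<Sum>k<g. X $$ (i+g,k) * X $$ (i+g,k+g)) \<longleftrightarrow> even (M $$ (i+g, i))" if i: "i < g" for i
  proof -
    have "(\<Sum>k<g. X $$ (i+g,k) * X $$ (i+g,k+g)) = (\<Sum>k<g. ((if i = k then 1 else 0) + N * M $$ (i+g,k+g)) * (N * M $$ (i+g,k)))"
      by (rule sum.cong) (use i in \<open>auto simp: X_eq\<close>)
    then show ?thesis using double_dvd_iff_even[OF N] by (simp add: sum_kronecker_plus_smult[OF i])
  qed
  have "deviation_diag N g X = 0\<^sub>v (2*g) \<longleftrightarrow> (\<forall>k<2*g. even ((M * Jmat g) $$ (k,k)))"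
    unfolding deviation_diag_def deviation_form_def M_def[symmetric] vec_eq_iff
    using dM by (auto simp: of_int_bit split: if_splits)
  also have "\<dots> \<longleftrightarrow> (\<forall>i<g. even (M $$ (i,i+g))) \<and> (\<forall>i<g. even (M $$ (i+g,i)))"
    by (rule even_diag_mult_Jmat_iff[OF dM])
  finally show ?thesis
    unfolding Igusa_iff_row_sums[OF dim_Gamma[OF X]] using X upper lower by auto
qed

lemma Igusa_subset_Gamma: "Igusa g N \<subseteq> Gamma g N"
  unfolding Igusa_def by auto

section \<open>\<open>\<Lambda>\<^sup>2(U)\<close> as the alternating matrices\<close>

definition alternating_mat :: "nat \<Rightarrow> bit mat set" where
  "alternating_mat n = {A \<in> carrier_mat n n. transpose_mat A = A \<and> (\<forall>i<n. A $$ (i,i) = 0)}"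

lemma index_tens[simp]: "i < dim_vec u \<Longrightarrow> j < dim_vec v \<Longrightarrow> tens u v $$ (i,j) = u $ i * v $ j"
  unfolding tens_def by simp

lemma dim_tens[simp]: "dim_row (tens u v) = dim_vec u" "dim_col (tens u v) = dim_vec v"
  unfolding tens_def by simp_all

lemma alternating_matI:
  assumes "dim_row A = n" "dim_col A = n" "\<And>i j. i < n \<Longrightarrow> j < n \<Longrightarrow> A $$ (j,i) = A $$ (i,j)"
    "\<And>i. i < n \<Longrightarrow> A $$ (i,i) = 0"
  shows "A \<in> alternating_mat n"
proof -
  have "transpose_mat A = A" by (rule eq_matI) (use assms in auto)
  then show ?thesis unfolding alternating_mat_def using assms by (auto intro!: carrier_matI)
qed

lemma alternating_matD:
  assumes "A \<in> alternating_mat n"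
  shows "dim_row A = n" "dim_col A = n" "\<And>i j. i < n \<Longrightarrow> j < n \<Longrightarrow> A $$ (j,i) = A $$ (i,j)"
    "\<And>i. i < n \<Longrightarrow> A $$ (i,i) = 0"
proof -
  show dims: "dim_row A = n" "dim_col A = n" using assms unfolding alternating_mat_def by auto
  have "transpose_mat A = A" using assms unfolding alternating_mat_def by auto
  then show "A $$ (j,i) = A $$ (i,j)" if "i < n" "j < n" for i j
    using that dims by (metis index_transpose_mat(1))
  show "\<And>i. i < n \<Longrightarrow> A $$ (i,i) = 0" using assms unfolding alternating_mat_def by auto
qed

lemma alternating_mat_add: "A \<in> alternating_mat n \<Longrightarrow> B \<in> alternating_mat n \<Longrightarrow> A + B \<in> alternating_mat n"
  using alternating_matD[of A n] alternating_matD[of B n] by (intro alternating_matI) auto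

lemma Lambda2_alternating: "M \<in> Lambda2 g \<Longrightarrow> M \<in> alternating_mat (2*g)"
proof (induction rule: Lambda2.induct)
  case zero then show ?case by (rule alternating_matI) auto
next
  case (add M u u')
  note A = alternating_matD[OF add.IH]
  show ?case
    by (rule alternating_matI) (use add.hyps A in \<open>auto simp: algebra_simps mult.commute\<close>)
qed

text \<open>An alternating matrix is the sum of the elements \<open>e\<^sub>r \<otimes> w\<^sub>r + w\<^sub>r \<otimes> e\<^sub>r\<close>, where \<open>w\<^sub>r\<close>
  is the part of its \<open>r\<close>-th row strictly left of the diagonal.\<close>

definition row_below_diag :: "nat \<Rightarrow> bit mat \<Rightarrow> nat \<Rightarrow> bit vec" where
  "row_below_diag n A r = vec n (\<lambda>j. if j < r then A $$ (r,j) else 0)"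

primrec alternating_partial_sum :: "nat \<Rightarrow> bit mat \<Rightarrow> nat \<Rightarrow> bit mat" where
  "alternating_partial_sum n A 0 = 0\<^sub>m n n"
| "alternating_partial_sum n A (Suc r) = alternating_partial_sum n A r +
     (tens (unit_vec n r) (row_below_diag n A r) + tens (row_below_diag n A r) (unit_vec n r))"

lemma dim_alternating_partial_sum[simp]:
  "dim_row (alternating_partial_sum n A r) = n" "dim_col (alternating_partial_sum n A r) = n"
  by (induction r) (simp_all add: row_below_diag_def)

lemma alternating_partial_sum_Lambda2: "r \<le> 2*g \<Longrightarrow> alternating_partial_sum (2*g) A r \<in> Lambda2 g"
  by (induction r) (simp_all add: Lambda2.zero Lambda2.add row_below_diag_def)

lemma index_alternating_partial_sum:
  "a < n \<Longrightarrow> b < n \<Longrightarrow> r \<le> n \<Longrightarrow> alternating_partial_sum n A r $$ (a,b) =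
   (if a < r \<and> b < a then A $$ (a,b) else 0) + (if b < r \<and> a < b then A $$ (b,a) else 0)"
  by (induction r) (auto simp: row_below_diag_def less_Suc_eq)

lemma alternating_Lambda2: assumes A: "A \<in> alternating_mat (2*g)" shows "A \<in> Lambda2 g"
proof -
  note alt = alternating_matD[OF A]
  have "alternating_partial_sum (2*g) A (2*g) = A"
  proof (rule eq_matI)
    fix i j assume "i < dim_row A" "j < dim_col A"
    then have i: "i < 2*g" and j: "j < 2*g" using alt by auto
    show "alternating_partial_sum (2*g) A (2*g) $$ (i,j) = A $$ (i,j)"
      unfolding index_alternating_partial_sum[OF i j order.refl] using i j alt(3)[OF j i] alt(4)[OF i]
      by (cases "i < j"; cases "j < i") auto
  qed (use alt in auto)
  then show ?thesis using alternating_partial_sum_Lambda2[of "2*g" g A] by simp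
qed

lemma Lambda2_eq_alternating_mat: "Lambda2 g = alternating_mat (2*g)"
  using Lambda2_alternating alternating_Lambda2 by blast

lemma deviation_form_Igusa_alternating:
  assumes X: "X \<in> Igusa g N" and N: "N \<noteq> 0" "even N"
  shows "deviation_form N g X \<in> alternating_mat (2*g)"
proof -
  have XG: "X \<in> Gamma g N" using X Igusa_subset_Gamma by auto
  have diag: "deviation_diag N g X = 0\<^sub>v (2*g)" using Igusa_iff_deviation_diag[OF XG N] X by simp
  show ?thesis unfolding alternating_mat_def
  proof (intro CollectI conjI allI impI)
    fix i assume i: "i < 2*g"
    show "deviation_form N g X $$ (i,i) = 0"
      using arg_cong[OF diag, of "\<lambda>v. v $ i"] i by (simp add: deviation_diag_def)
  qed (simp_all add: deviation_form_symmetric[OF XG N])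
qed

section \<open>Transvections\<close>

definition outer :: "int vec \<Rightarrow> int mat" where
  "outer v = mat (dim_vec v) (dim_vec v) (\<lambda>(i,j). v $ i * v $ j)"

definition transvection :: "int \<Rightarrow> nat \<Rightarrow> int vec \<Rightarrow> int mat" where
  "transvection N g v = 1\<^sub>m (2*g) + N \<cdot>\<^sub>m (outer v * Jmat g)"

lemma dim_outer[simp]: "dim_row (outer v) = dim_vec v" "dim_col (outer v) = dim_vec v"
  unfolding outer_def by simp_all

lemma index_outer[simp]: "i < dim_vec v \<Longrightarrow> j < dim_vec v \<Longrightarrow> outer v $$ (i,j) = v $ i * v $ j"
  unfolding outer_def by simp

lemma transpose_outer: "transpose_mat (outer v) = outer v"
  by (rule eq_matI) auto

lemma Jmat_isotropic: assumes v: "dim_vec v = 2*g"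
  shows "(\<Sum>l<2*g. \<Sum>k<2*g. v $ k * Jmat g $$ (k,l) * v $ l) = 0"
proof -
  define S where "S = (\<Sum>l<2*g. \<Sum>k<2*g. v $ k * Jmat g $$ (k,l) * v $ l)"
  have "S = (\<Sum>k<2*g. \<Sum>l<2*g. v $ k * Jmat g $$ (k,l) * v $ l)"
    unfolding S_def by (rule sum.swap)
  also have "\<dots> = (\<Sum>k<2*g. \<Sum>l<2*g. - (v $ l * Jmat g $$ (l,k) * v $ k))"
    by (intro sum.cong refl) (auto simp: index_Jmat)
  also have "\<dots> = - S" unfolding S_def by (simp add: sum_negf)
  finally show ?thesis unfolding S_def by simp
qed

lemma outer_Jmat_outer: assumes v: "dim_vec v = 2*g"
  shows "outer v * Jmat g * outer v = 0\<^sub>m (2*g) (2*g)"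
proof (rule eq_matI)
  fix a b assume "a < dim_row (0\<^sub>m (2 * g) (2 * g) :: int mat)" "b < dim_col (0\<^sub>m (2 * g) (2 * g) :: int mat)"
  then have a: "a < 2*g" and b: "b < 2*g" by auto
  have "(outer v * Jmat g * outer v) $$ (a,b) = (\<Sum>l<2*g. (\<Sum>k<2*g. v $ a * v $ k * Jmat g $$ (k,l)) * (v $ l * v $ b))"
    using a b v by (simp add: scalar_prod_def lessThan_atLeast0)
  also have "\<dots> = v $ a * v $ b * (\<Sum>l<2*g. \<Sum>k<2*g. v $ k * Jmat g $$ (k,l) * v $ l)"
    by (simp add: sum_distrib_left sum_distrib_right algebra_simps)
  also have "\<dots> = 0" using Jmat_isotropic[OF v] by simp
  finally show "(outer v * Jmat g * outer v) $$ (a,b) = 0\<^sub>m (2 * g) (2 * g) $$ (a,b)" using a b by simp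
qed (use v in auto)

lemma transvection_Sp: assumes v: "dim_vec v = 2*g" shows "transvection N g v \<in> Sp g"
proof -
  define P where "P = outer v"
  define J where "J = Jmat g"
  have dP: "dim_row P = 2*g" "dim_col P = 2*g" unfolding P_def using v by auto
  have dJ: "dim_row J = 2*g" "dim_col J = 2*g" unfolding J_def by auto
  have "transpose_mat (transvection N g v) * J = J + N \<cdot>\<^sub>m (transpose_mat J * P * J)"
    unfolding transvection_def P_def[symmetric] J_def[symmetric]
    using dP dJ by (simp add: mat_dim_simps transpose_outer P_def)
  then have "transpose_mat (transvection N g v) * J * transvection N g v
     = J + N \<cdot>\<^sub>m (transpose_mat J * P * J) + N \<cdot>\<^sub>m (J * (P * J) + N \<cdot>\<^sub>m (transpose_mat J * (P * J * P) * J))"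
    unfolding transvection_def P_def[symmetric] J_def[symmetric]
    using dP dJ by (simp add: mat_dim_simps)
  also have "P * J * P = 0\<^sub>m (2*g) (2*g)" unfolding P_def J_def by (rule outer_Jmat_outer[OF v])
  also have "transpose_mat J * P * J = - (J * (P * J))"
    unfolding J_def transpose_Jmat using dP by (simp add: assoc_mult_mat_dim)
  finally have "transpose_mat (transvection N g v) * J * transvection N g v = J"
    by (rule trans) (rule eq_matI, use dP dJ in \<open>simp_all add: algebra_simps\<close>)
  then show ?thesis unfolding Sp_def J_def transvection_def using v by (auto intro!: carrier_matI)
qed

lemma transvection_Gamma: "dim_vec v = 2*g \<Longrightarrow> transvection N g v \<in> Gamma g N"
  by (rule GammaI[OF transvection_Sp, of _ _ "outer v * Jmat g"])
    (auto simp: transvection_def intro!: carrier_matI)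

definition lift_bit_vec :: "bit vec \<Rightarrow> int vec" where
  "lift_bit_vec u = vec (dim_vec u) (\<lambda>i. if u $ i = 1 then 1 else 0)"

lemma dim_lift_bit_vec[simp]: "dim_vec (lift_bit_vec u) = dim_vec u"
  unfolding lift_bit_vec_def by simp

lemma of_int_lift_bit_vec[simp]: "i < dim_vec u \<Longrightarrow> (of_int (lift_bit_vec u $ i) :: bit) = u $ i"
  unfolding lift_bit_vec_def by (cases "u $ i") auto

lemma deviation_form_transvection:
  assumes u: "dim_vec u = 2*g" and N: "N \<noteq> 0"
  shows "deviation_form N g (transvection N g (lift_bit_vec u)) = tens u u"
proof -
  let ?P = "outer (lift_bit_vec u)"
  have dP: "dim_row ?P = 2*g" "dim_col ?P = 2*g" using u by auto
  have "deviation N g (transvection N g (lift_bit_vec u)) = ?P * Jmat g"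
    unfolding transvection_def by (rule deviation_one_plus_smult) (use dP N in \<open>auto intro!: carrier_matI\<close>)
  then have "deviation_form N g (transvection N g (lift_bit_vec u)) = red2 ?P * red2 (Jmat g * Jmat g)"
    unfolding deviation_form_def using dP by (simp add: assoc_mult_mat_dim red2_mult)
  also have "\<dots> = tens u u"
    unfolding Jmat_mult_Jmat red2_uminus red2_one by (rule eq_matI) (use u in simp_all)
  finally show ?thesis .
qed

lemma deviation_diag_transvection:
  assumes u: "dim_vec u = 2*g" and N: "N \<noteq> 0"
  shows "deviation_diag N g (transvection N g (lift_bit_vec u)) = u"
proof (rule eq_vecI)
  fix i assume "i < dim_vec u"
  then show "deviation_diag N g (transvection N g (lift_bit_vec u)) $ i = u $ i"
    unfolding deviation_diag_def deviation_form_transvection[OF u N] using u by (cases "u $ i") simp_all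
qed (simp add: deviation_diag_def u)

section \<open>The two quotients\<close>

lemma matgrp_simps[simp]:
  "carrier (matgrp g S) = S" "mult (matgrp g S) = (*)" "one (matgrp g S) = 1\<^sub>m (2*g)"
  unfolding matgrp_def by simp_all

lemma Ugrp_simps[simp]: "carrier (Ugrp g) = carrier_vec (2*g)" "mult (Ugrp g) = (+)" "one (Ugrp g) = 0\<^sub>v (2*g)"
  unfolding Ugrp_def by simp_all

lemma Lambda2grp_simps[simp]:
  "carrier (Lambda2grp g) = Lambda2 g" "mult (Lambda2grp g) = (+)" "one (Lambda2grp g) = 0\<^sub>m (2*g) (2*g)"
  unfolding Lambda2grp_def by simp_all

lemma group_matgrp_Gamma: "group (matgrp g (Gamma g N))"
proof (rule groupI)
  fix x y z assume "x \<in> carrier (matgrp g (Gamma g N))" "y \<in> carrier (matgrp g (Gamma g N))"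
    "z \<in> carrier (matgrp g (Gamma g N))"
  then show "x \<otimes>\<^bsub>matgrp g (Gamma g N)\<^esub> y \<otimes>\<^bsub>matgrp g (Gamma g N)\<^esub> z
      = x \<otimes>\<^bsub>matgrp g (Gamma g N)\<^esub> (y \<otimes>\<^bsub>matgrp g (Gamma g N)\<^esub> z)"
    by (simp add: assoc_mult_mat_dim dim_Gamma)
next
  fix x assume x: "x \<in> carrier (matgrp g (Gamma g N))"
  then show "\<one>\<^bsub>matgrp g (Gamma g N)\<^esub> \<otimes>\<^bsub>matgrp g (Gamma g N)\<^esub> x = x" by (simp add: dim_Gamma)
  show "\<exists>y\<in>carrier (matgrp g (Gamma g N)). y \<otimes>\<^bsub>matgrp g (Gamma g N)\<^esub> x = \<one>\<^bsub>matgrp g (Gamma g N)\<^esub>"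
    using Gamma_Sp_inverse[of x g N] Sp_inverse_left[OF Gamma_Sp[of x g N]] x by auto
qed (auto simp: Gamma_mult Gamma_one)

lemma group_Ugrp: "group (Ugrp g)"
proof (rule groupI)
  fix x assume x: "x \<in> carrier (Ugrp g)"
  then have "x + x = 0\<^sub>v (2*g)" by (intro eq_vecI) auto
  then show "\<exists>y\<in>carrier (Ugrp g). y \<otimes>\<^bsub>Ugrp g\<^esub> x = \<one>\<^bsub>Ugrp g\<^esub>" using x by auto
qed (auto simp: assoc_add_vec)

lemma group_Lambda2grp: "group (Lambda2grp g)"
proof (rule groupI)
  fix x y z assume "x \<in> carrier (Lambda2grp g)" "y \<in> carrier (Lambda2grp g)" "z \<in> carrier (Lambda2grp g)"
  then show "x \<otimes>\<^bsub>Lambda2grp g\<^esub> y \<otimes>\<^bsub>Lambda2grp g\<^esub> z = x \<otimes>\<^bsub>Lambda2grp g\<^esub> (y \<otimes>\<^bsub>Lambda2grp g\<^esub> z)"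
    unfolding Lambda2grp_simps Lambda2_eq_alternating_mat
    by (intro assoc_add_mat) (auto simp: alternating_mat_def)
next
  fix x assume x: "x \<in> carrier (Lambda2grp g)"
  then have "x \<in> carrier_mat (2*g) (2*g)"
    unfolding Lambda2grp_simps Lambda2_eq_alternating_mat alternating_mat_def by simp
  moreover from this have "x + x = 0\<^sub>m (2*g) (2*g)" by (intro eq_matI) auto
  ultimately show "\<one>\<^bsub>Lambda2grp g\<^esub> \<otimes>\<^bsub>Lambda2grp g\<^esub> x = x"
    and "\<exists>y\<in>carrier (Lambda2grp g). y \<otimes>\<^bsub>Lambda2grp g\<^esub> x = \<one>\<^bsub>Lambda2grp g\<^esub>"
    using x by auto
qed (auto simp: Lambda2_eq_alternating_mat alternating_mat_add intro: alternating_matI)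

lemma deviation_diag_group_hom:
  assumes "N \<noteq> 0" "even N"
  shows "group_hom (matgrp g (Gamma g N)) (Ugrp g) (deviation_diag N g)"
  using group_matgrp_Gamma group_Ugrp deviation_diag_mult[OF _ _ assms]
  by (auto simp: group_hom_def group_hom_axioms_def hom_def)

lemma kernel_deviation_diag:
  assumes N: "N \<noteq> 0" "even N"
  shows "kernel (matgrp g (Gamma g N)) (Ugrp g) (deviation_diag N g) = Igusa g N"
proof -
  have "X \<in> Gamma g N \<and> deviation_diag N g X = 0\<^sub>v (2*g) \<longleftrightarrow> X \<in> Igusa g N" for X
    using Igusa_iff_deviation_diag[OF _ N, of X g] Igusa_subset_Gamma[of g N] by blast
  then show ?thesis unfolding kernel_def by auto
qed

lemma deviation_diag_onto:
  assumes N: "N \<noteq> 0" "even N"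
  shows "deviation_diag N g ` Gamma g N = carrier_vec (2*g)"
proof (intro equalityI subsetI)
  fix u :: "bit vec" assume "u \<in> carrier_vec (2*g)"
  then show "u \<in> deviation_diag N g ` Gamma g N"
    using deviation_diag_transvection[OF _ N(1)] transvection_Gamma
    by (intro image_eqI[of u _ "transvection N g (lift_bit_vec u)"]) auto
qed auto

lemma group_matgrp_Igusa:
  assumes "N \<noteq> 0" "even N"
  shows "group (matgrp g (Igusa g N))"
proof -
  have "subgroup (Igusa g N) (matgrp g (Gamma g N))"
    using group_hom.subgroup_kernel[OF deviation_diag_group_hom[OF assms]] kernel_deviation_diag[OF assms]
    by simp
  from subgroup.subgroup_is_group[OF this group_matgrp_Gamma] show ?thesis
    unfolding matgrp_def by simp
qed

lemma deviation_form_group_hom: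
  assumes N: "N \<noteq> 0" "even N"
  shows "group_hom (matgrp g (Igusa g N)) (Lambda2grp g) (deviation_form N g)"
  using group_matgrp_Igusa[OF N] group_Lambda2grp deviation_form_mult[OF _ _ N]
    deviation_form_Igusa_alternating[OF _ N] subsetD[OF Igusa_subset_Gamma]
  by (auto simp: group_hom_def group_hom_axioms_def hom_def Lambda2_eq_alternating_mat)

lemma deviation_form_eq_zero_iff:
  assumes X: "X \<in> Gamma g N"
  shows "deviation_form N g X = 0\<^sub>m (2*g) (2*g) \<longleftrightarrow> red2 (deviation N g X) = 0\<^sub>m (2*g) (2*g)"
proof
  assume "deviation_form N g X = 0\<^sub>m (2*g) (2*g)"
  moreover have "red2 (deviation N g X) = deviation_form N g X * red2 (Jmat g)"
    unfolding deviation_form_def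
    by (simp add: red2_mult assoc_mult_mat_dim red2_Jmat_squared)
  ultimately show "red2 (deviation N g X) = 0\<^sub>m (2*g) (2*g)" by simp
next
  assume "red2 (deviation N g X) = 0\<^sub>m (2*g) (2*g)"
  then show "deviation_form N g X = 0\<^sub>m (2*g) (2*g)" unfolding deviation_form_def by (simp add: red2_mult)
qed

lemma Gamma_double_iff:
  assumes N: "N \<noteq> 0"
  shows "X \<in> Gamma g (2*N) \<longleftrightarrow> X \<in> Gamma g N \<and> red2 (deviation N g X) = 0\<^sub>m (2*g) (2*g)"
proof
  assume X: "X \<in> Gamma g (2*N)"
  have "red2 (deviation N g X) = 0\<^sub>m (2*g) (2*g)"
  proof (rule eq_matI)
    fix i j assume "i < dim_row (0\<^sub>m (2*g) (2*g) :: bit mat)" "j < dim_col (0\<^sub>m (2*g) (2*g) :: bit mat)"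
    then have i: "i < 2*g" and j: "j < 2*g" by auto
    have "2*N dvd (X - 1\<^sub>m (2*g)) $$ (i,j)" using X i j unfolding Gamma_def by auto
    then obtain c where "X $$ (i,j) - (if i = j then 1 else 0) = 2 * N * c"
      using i j dim_Gamma[OF X] by (auto elim!: dvdE)
    then show "red2 (deviation N g X) $$ (i,j) = 0\<^sub>m (2*g) (2*g) $$ (i,j)"
      using i j N by (simp add: deviation_def of_int_bit mult.commute[of 2 N] mult.assoc)
  qed simp_all
  with Gamma_subset_double[OF X] show "X \<in> Gamma g N \<and> red2 (deviation N g X) = 0\<^sub>m (2*g) (2*g)" by simp
next
  assume "X \<in> Gamma g N \<and> red2 (deviation N g X) = 0\<^sub>m (2*g) (2*g)"
  then have X: "X \<in> Gamma g N" and R: "red2 (deviation N g X) = 0\<^sub>m (2*g) (2*g)" by auto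
  have "2*N dvd (X - 1\<^sub>m (2*g)) $$ (i,j)" if i: "i < 2*g" and j: "j < 2*g" for i j
  proof -
    have "even (deviation N g X $$ (i,j))"
      using arg_cong[OF R, of "\<lambda>A. A $$ (i,j)"] i j by (simp add: of_int_bit split: if_splits)
    moreover have "(X - 1\<^sub>m (2*g)) $$ (i,j) = N * deviation N g X $$ (i,j)"
      using arg_cong[OF Gamma_eq_one_plus_deviation[OF X], of "\<lambda>A. (A - 1\<^sub>m (2*g)) $$ (i,j)"] i j by simp
    ultimately show ?thesis by (auto elim!: evenE)
  qed
  then show "X \<in> Gamma g (2*N)" using Gamma_Sp[OF X] unfolding Gamma_def by auto
qed

lemma kernel_deviation_form:
  assumes N: "N \<noteq> 0" "even N"
  shows "kernel (matgrp g (Igusa g N)) (Lambda2grp g) (deviation_form N g) = Gamma g (2*N)"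
proof -
  have "X \<in> Igusa g N \<and> deviation_form N g X = 0\<^sub>m (2*g) (2*g) \<longleftrightarrow> X \<in> Gamma g (2*N)" for X
  proof
    assume "X \<in> Igusa g N \<and> deviation_form N g X = 0\<^sub>m (2*g) (2*g)"
    then show "X \<in> Gamma g (2*N)"
      using Gamma_double_iff[OF N(1)] deviation_form_eq_zero_iff Igusa_subset_Gamma by blast
  next
    assume "X \<in> Gamma g (2*N)"
    then have X: "X \<in> Gamma g N" and F: "deviation_form N g X = 0\<^sub>m (2*g) (2*g)"
      using Gamma_double_iff[OF N(1)] deviation_form_eq_zero_iff by blast+
    have "deviation_diag N g X = 0\<^sub>v (2*g)"
      unfolding deviation_diag_def F by (rule eq_vecI) auto
    then show "X \<in> Igusa g N \<and> deviation_form N g X = 0\<^sub>m (2*g) (2*g)"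
      using Igusa_iff_deviation_diag[OF X N] F by simp
  qed
  then show ?thesis unfolding kernel_def by auto
qed

lemma bit_cross_terms: "(a::bit) * b + c * d + (a + c) * (b + d) = a * d + c * b"
  by (cases a; cases b; cases c; cases d) simp_all

text \<open>The generator \<open>u \<otimes> u' + u' \<otimes> u\<close> of \<open>\<Lambda>\<^sup>2(U)\<close> is the image of the product of the
  transvections along \<open>u\<close>, \<open>u'\<close> and \<open>u + u'\<close>.\<close>

lemma deviation_form_onto:
  assumes N: "N \<noteq> 0" "even N"
  shows "deviation_form N g ` Igusa g N = Lambda2 g"
proof (intro equalityI subsetI)
  fix M assume "M \<in> Lambda2 g"
  then show "M \<in> deviation_form N g ` Igusa g N"
  proof (induction rule: Lambda2.induct)
    case zero
    have "1\<^sub>m (2*g) \<in> Igusa g N"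
      using group.subgroup_self[OF group_matgrp_Igusa[OF N]] subgroup.one_closed by fastforce
    then show ?case using deviation_form_one[of N g] by (auto intro!: image_eqI[of _ _ "1\<^sub>m (2*g)"])
  next
    case (add M u u')
    then obtain X where X: "X \<in> Igusa g N" and M: "M = deviation_form N g X" by auto
    have u: "dim_vec u = 2*g" "dim_vec u' = 2*g" "dim_vec (u + u') = 2*g" using add.hyps by auto
    define T where "T w = transvection N g (lift_bit_vec w)" for w
    have T: "T w \<in> Gamma g N" if "dim_vec w = 2*g" for w
      unfolding T_def using that by (intro transvection_Gamma) simp
    define Z where "Z = T u * T u' * T (u + u')"
    have ZG: "Z \<in> Gamma g N" unfolding Z_def using Gamma_mult T u by blast
    have FZ: "deviation_form N g Z = tens u u' + tens u' u"
    proof -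
      have "deviation_form N g Z = tens u u + tens u' u' + tens (u + u') (u + u')"
        unfolding Z_def using T u
        by (simp add: deviation_form_mult[OF _ _ N] Gamma_mult T_def deviation_form_transvection[OF _ N(1)])
      also have "\<dots> = tens u u' + tens u' u"
        by (rule eq_matI) (use u in \<open>simp_all add: bit_cross_terms\<close>)
      finally show ?thesis .
    qed
    have "deviation_diag N g Z = 0\<^sub>v (2*g)"
      unfolding deviation_diag_def FZ by (rule eq_vecI) (use u in \<open>simp_all add: mult.commute\<close>)
    then have ZI: "Z \<in> Igusa g N" using Igusa_iff_deviation_diag[OF ZG N] by simp
    have "deviation_form N g (X * Z) = M + (tens u u' + tens u' u)"
      unfolding deviation_form_mult[OF subsetD[OF Igusa_subset_Gamma X] ZG N] M FZ ..
    moreover have "X * Z \<in> Igusa g N"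
      using group.subgroup_self[OF group_matgrp_Igusa[OF N]] X ZI subgroup.m_closed by fastforce
    ultimately show ?case by (metis image_eqI)
  qed
qed (use deviation_form_Igusa_alternating[OF _ N] Lambda2_eq_alternating_mat in auto)

lemma (in group_hom) FactGroup_image_constant:
  assumes S: "S \<in> carrier (G Mod kernel G H h)" and "x \<in> S" "y \<in> S"
  shows "h y = h x"
proof -
  obtain a where a: "a \<in> carrier G" and Sa: "S = kernel G H h #> a"
    using S unfolding FactGroup_def RCOSETS_def by auto
  have "h z = h a" if "z \<in> S" for z
    using that a unfolding Sa r_coset_def kernel_def by auto
  then show ?thesis using assms by simp
qed

lemma (in group_hom) FactGroup_the_elem_image_image:
  assumes hc: "\<And>x. x \<in> carrier G \<Longrightarrow> h (c x) = \<alpha> (h x)"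
    and S: "S \<in> carrier (G Mod kernel G H h)"
  shows "the_elem (h ` c ` S) = \<alpha> (the_elem (h ` S))"
proof -
  obtain x where x: "x \<in> S" using FactGroup_nonempty[OF S] by blast
  have S_carrier: "S \<subseteq> carrier G"
    using S unfolding FactGroup_def RCOSETS_def r_coset_def kernel_def by auto
  have hS: "h ` S = {h x}"
    using x FactGroup_image_constant[OF S x] by blast
  have "h ` c ` S = \<alpha> ` h ` S"
    using hc S_carrier by (auto simp: image_image intro!: image_cong)
  with hS show ?thesis by simp
qed

theorem Gamma_mod_Igusa_iso_U:
  assumes N: "N \<noteq> 0" "even N"
  shows "(\<lambda>S. the_elem (deviation_diag N g ` S)) \<in> iso (matgrp g (Gamma g N) Mod Igusa g N) (Ugrp g)"
    and "\<And>X Xi S. X \<in> Sp g \<Longrightarrow> Xi \<in> carrier_mat (2*g) (2*g) \<Longrightarrow> X * Xi = 1\<^sub>m (2*g) \<Longrightarrow>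
      S \<in> carrier (matgrp g (Gamma g N) Mod Igusa g N) \<Longrightarrow>
      the_elem (deviation_diag N g ` conjset X Xi S) = red2 X *\<^sub>v the_elem (deviation_diag N g ` S)"
proof -
  interpret group_hom "matgrp g (Gamma g N)" "Ugrp g" "deviation_diag N g"
    by (rule deviation_diag_group_hom[OF N])
  have "deviation_diag N g ` carrier (matgrp g (Gamma g N)) = carrier (Ugrp g)"
    using deviation_diag_onto[OF N] by simp
  from FactGroup_iso_set[OF this]
  show "(\<lambda>S. the_elem (deviation_diag N g ` S)) \<in> iso (matgrp g (Gamma g N) Mod Igusa g N) (Ugrp g)"
    unfolding kernel_deviation_diag[OF N] .
  fix X Xi S assume X: "X \<in> Sp g" and Xi: "Xi \<in> carrier_mat (2*g) (2*g)" and XXi: "X * Xi = 1\<^sub>m (2*g)"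
    and S: "S \<in> carrier (matgrp g (Gamma g N) Mod Igusa g N)"
  have "S \<in> carrier (matgrp g (Gamma g N) Mod kernel (matgrp g (Gamma g N)) (Ugrp g) (deviation_diag N g))"
    using S unfolding kernel_deviation_diag[OF N] .
  from FactGroup_the_elem_image_image[OF _ this, of "\<lambda>Y. X * Y * Xi"] deviation_diag_conj[OF _ X Xi XXi N]
  show "the_elem (deviation_diag N g ` conjset X Xi S) = red2 X *\<^sub>v the_elem (deviation_diag N g ` S)"
    unfolding conjset_def by simp
qed

theorem Igusa_mod_Gamma_double_iso_Lambda2:
  assumes N: "N \<noteq> 0" "even N"
  shows "(\<lambda>S. the_elem (deviation_form N g ` S)) \<in> iso (matgrp g (Igusa g N) Mod Gamma g (2*N)) (Lambda2grp g)"
    and "\<And>X Xi S. X \<in> Sp g \<Longrightarrow> Xi \<in> carrier_mat (2*g) (2*g) \<Longrightarrow> X * Xi = 1\<^sub>m (2*g) \<Longrightarrow>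
      S \<in> carrier (matgrp g (Igusa g N) Mod Gamma g (2*N)) \<Longrightarrow>
      the_elem (deviation_form N g ` conjset X Xi S)
        = red2 X * the_elem (deviation_form N g ` S) * transpose_mat (red2 X)"
proof -
  interpret group_hom "matgrp g (Igusa g N)" "Lambda2grp g" "deviation_form N g"
    by (rule deviation_form_group_hom[OF N])
  have "deviation_form N g ` carrier (matgrp g (Igusa g N)) = carrier (Lambda2grp g)"
    using deviation_form_onto[OF N] by simp
  from FactGroup_iso_set[OF this]
  show "(\<lambda>S. the_elem (deviation_form N g ` S)) \<in> iso (matgrp g (Igusa g N) Mod Gamma g (2*N)) (Lambda2grp g)"
    unfolding kernel_deviation_form[OF N] .
  fix X Xi S assume X: "X \<in> Sp g" and Xi: "Xi \<in> carrier_mat (2*g) (2*g)" and XXi: "X * Xi = 1\<^sub>m (2*g)"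
    and S: "S \<in> carrier (matgrp g (Igusa g N) Mod Gamma g (2*N))"
  have "S \<in> carrier (matgrp g (Igusa g N) Mod kernel (matgrp g (Igusa g N)) (Lambda2grp g) (deviation_form N g))"
    using S unfolding kernel_deviation_form[OF N] .
  from FactGroup_the_elem_image_image[OF _ this, of "\<lambda>Y. X * Y * Xi"]
    deviation_form_conj[OF subsetD[OF Igusa_subset_Gamma] X Xi XXi N(1)]
  show "the_elem (deviation_form N g ` conjset X Xi S)
      = red2 X * the_elem (deviation_form N g ` S) * transpose_mat (red2 X)"
    unfolding conjset_def by simp
qed

theorem proposition5p2:
  fixes g n :: nat
  assumes "g \<ge> 1" and "n \<ge> 1"
  shows "(\<exists>\<phi>. \<phi> \<in> iso (matgrp g (Gamma g (2^n)) Mod Igusa g (2^n)) (Ugrp g) \<and>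
            (\<forall>X \<in> Sp g. \<forall>Xi \<in> carrier_mat (2*g) (2*g). X * Xi = 1\<^sub>m (2*g) \<longrightarrow>
               (\<forall>S \<in> carrier (matgrp g (Gamma g (2^n)) Mod Igusa g (2^n)).
                  \<phi> (conjset X Xi S) = red2 X *\<^sub>v \<phi> S)))
       \<and> (\<exists>\<psi>. \<psi> \<in> iso (matgrp g (Igusa g (2^n)) Mod Gamma g (2^(n+1))) (Lambda2grp g) \<and>
            (\<forall>X \<in> Sp g. \<forall>Xi \<in> carrier_mat (2*g) (2*g). X * Xi = 1\<^sub>m (2*g) \<longrightarrow>
               (\<forall>S \<in> carrier (matgrp g (Igusa g (2^n)) Mod Gamma g (2^(n+1))).
                  \<psi> (conjset X Xi S) = red2 X * \<psi> S * transpose_mat (red2 X))))"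
proof -
  define N :: int where "N = 2^n"
  have N: "N \<noteq> 0" "even N" using assms(2) unfolding N_def by auto
  have N2: "(2::int)^(n+1) = 2 * N" unfolding N_def by simp
  show ?thesis unfolding N_def[symmetric] N2
    using Gamma_mod_Igusa_iso_U[OF N, where g=g] Igusa_mod_Gamma_double_iso_Lambda2[OF N, where g=g]
    by blast
qed

end
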